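(* $\mu$-almost surely, for every $m\in\mathbb Z$ the value $\phi(m)$ is finite; that is, almost surely every burger is eventually consumed by some order and every order consumes some earlier burger.
   Context: Fix an integer $k\ge 2$ and $p\in[0,1]$. Let $\Theta=\{b_1,\dots,b_k,o_1,\dots,o_k,F\}$, where $b_i$ is a burger of type $i$, $o_i$ is an order of type $i$, and $F$ is a flexible order. Words in $\Theta$ are considered modulo the relations $b_io_i=b_iF=\varnothing$ and $b_io_j=o_jb_i$ for $i\ne j$. Concretely, reading a word left to right, each $o_i$ consumes the most recent not-yet-consumed $b_i$ to its left, and each $F$ consumes the most recent not-yet-consumed burger of any type to its left. Let $(X(n))_{n\in\mathbb Z}$ be i.i.d. $\Theta$-valued random variables with $\mathbb P(X(n)=b_i)=\frac1{2k}$, $\mathbb P(X(n)=o_i)=\frac{1-p}{2k}$ for each $i$, and $\mathbb P(X(n)=F)=\frac p2$; let $\mu$ denote their law on $\Theta^{\mathbb Z}$. If the burger $X(m)$ is consumed by the order $X(n)$ (with $m<n$), set $\phi(m)=n$ and $\phi(n)=m$. If a burger $X(m)$ is never consumed, set $\phi(m)=\infty$. If an order $X(n)$ consumes no burger, set $\phi(n)=-\infty$. *)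

theory Defs
  imports "HOL-Probability.Probability"
begin

text \<open>The alphabet Theta: burgers and orders of types 0..k-1 (indices \<open>< k\<close>),
  and the flexible order F.\<close>
datatype theta = Burger nat | Order nat | Flex

definition is_burger :: "theta \<Rightarrow> bool" where
  "is_burger x = (case x of Burger _ \<Rightarrow> True | _ \<Rightarrow> False)"

text \<open>One-letter law: P(b_i) = 1/(2k), P(o_i) = (1-p)/(2k), P(F) = p/2.\<close>
definition theta_pmf :: "nat \<Rightarrow> real \<Rightarrow> theta pmf" where
  "theta_pmf k p =
     bind_pmf (bernoulli_pmf (1/2)) (\<lambda>b.
       if b then map_pmf Burger (pmf_of_set {..<k})
       else bind_pmf (bernoulli_pmf p) (\<lambda>f.
              if f then return_pmf Flex else map_pmf Order (pmf_of_set {..<k})))"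

definition burger_measure :: "nat \<Rightarrow> real \<Rightarrow> (int \<Rightarrow> theta) measure" where
  "burger_measure k p = (\<Pi>\<^sub>M n\<in>(UNIV::int set). measure_pmf (theta_pmf k p))"

text \<open>Stack of unconsumed burgers (position, type), most recent first.\<close>
fun del_first_type :: "nat \<Rightarrow> (nat \<times> nat) list \<Rightarrow> (nat \<times> nat) list" where
  "del_first_type i [] = []"
| "del_first_type i ((q, t) # s) = (if t = i then s else (q, t) # del_first_type i s)"

fun find_first_type :: "nat \<Rightarrow> (nat \<times> nat) list \<Rightarrow> nat option" where
  "find_first_type i [] = None"
| "find_first_type i ((q, t) # s) = (if t = i then Some q else find_first_type i s)"

fun consumed :: "(nat \<times> nat) list \<Rightarrow> theta \<Rightarrow> nat option" where
  "consumed s (Burger i) = None"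
| "consumed s (Order i) = find_first_type i s"
| "consumed s Flex = (case s of [] \<Rightarrow> None | (q, t) # _ \<Rightarrow> Some q)"

fun step :: "(nat \<times> nat) list \<Rightarrow> nat \<Rightarrow> theta \<Rightarrow> (nat \<times> nat) list" where
  "step s j (Burger i) = (j, i) # s"
| "step s j (Order i) = del_first_type i s"
| "step s j Flex = (case s of [] \<Rightarrow> [] | _ # s' \<Rightarrow> s')"

definition stack_of :: "theta list \<Rightarrow> (nat \<times> nat) list" where
  "stack_of w = fold (\<lambda>(j, x) s. step s j x) (zip [0..<length w] w) []"

text \<open>Which burger X(n) consumes
  among X(m..n-1) depends only on the finite word X(m), ..., X(n-1): reading it
  from the left starting with an empty stack, X(n) consumes X(m) iff it takes the
  entry at position 0.\<close>
definition matched :: "(int \<Rightarrow> theta) \<Rightarrow> int \<Rightarrow> int \<Rightarrow> bool" where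
  "matched X m n \<longleftrightarrow> m < n \<and>
     consumed (stack_of (map (\<lambda>j. X (m + int j)) [0..<nat (n - m)])) (X n) = Some 0"

definition phi_finite :: "(int \<Rightarrow> theta) \<Rightarrow> int \<Rightarrow> bool" where
  "phi_finite X m \<longleftrightarrow>
     (if is_burger (X m) then (\<exists>n. matched X m n) else (\<exists>l. matched X l m))"

end

theory Submission
  imports Defs
begin

text \<open>Call \<open>X 0\<close> lonely if it is a burger that is never consumed or an order that consumes
  nothing. By translation invariance, \<open>X 0\<close> is consumed by \<open>X d\<close> with the same probability
  as \<open>X 0\<close> consumes \<open>X (-d)\<close>; summing over \<open>d\<close>, and since burgers and orders both have
  probability \<open>1/2\<close>, lonely burgers and lonely orders at \<open>0\<close> are equally likely.
  A lonely burger of type \<open>j\<close> at \<open>0\<close> stays on the stack forever, so every later order of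
  type \<open>j\<close> or \<open>F\<close> consumes something; since events depending on far-apart windows are
  independent, this forces \<open>P(lonely burger of type j) * P(lonely order of type j or F) = 0\<close>.
  The burger types being exchangeable, summing over \<open>j\<close> shows that the square of the common
  probability of lonely burgers and orders vanishes.\<close>

section \<open>Stacks of unconsumed burgers\<close>

lemma stack_of_Nil [simp]: "stack_of [] = []"
  by (simp add: stack_of_def)

lemma stack_of_snoc: "stack_of (w @ [x]) = step (stack_of w) (length w) x"
  by (simp add: stack_of_def)

lemma set_del_first_type_subset: "set (del_first_type i s) \<subseteq> set s"
  by (induction i s rule: del_first_type.induct) auto

lemma step_Flex: "step s j Flex = tl s"
  by (cases s) auto

lemma set_step_subset: "set (step s j x) \<subseteq> set s \<union> {(j, i) | i. x = Burger i}"
  using set_del_first_type_subset[of _ s] by (cases x; cases s) auto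

lemma stack_of_entry:
  "e \<in> set (stack_of w) \<Longrightarrow> fst e < length w \<and> w ! fst e = Burger (snd e)"
proof (induction w arbitrary: e rule: rev_induct)
  case (snoc x w)
  then show ?case
    using set_step_subset[of "stack_of w" "length w" x]
    by (fastforce simp: stack_of_snoc nth_append)
qed simp

lemma stack_of_append_low:
  "e \<in> set (stack_of (w @ w')) \<Longrightarrow> fst e < length w \<Longrightarrow> e \<in> set (stack_of w)"
proof (induction w' arbitrary: e rule: rev_induct)
  case (snoc x w')
  then show ?case
    using set_step_subset[of "stack_of (w @ w')" "length w + length w'" x]
    by (fastforce simp: stack_of_snoc[of "w @ w'", simplified])
qed simp

abbreviation positions_desc :: "(nat \<times> nat) list \<Rightarrow> bool" where
  "positions_desc s \<equiv> sorted_wrt (\<lambda>a b. fst b < fst a) s"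

lemma positions_desc_del_first_type:
  "positions_desc s \<Longrightarrow> positions_desc (del_first_type i s)"
  by (induction i s rule: del_first_type.induct) (auto dest: subsetD[OF set_del_first_type_subset])

lemma positions_desc_stack_of: "positions_desc (stack_of w)"
proof (induction w rule: rev_induct)
  case (snoc x w)
  have "\<forall>e \<in> set (stack_of w). fst e < length w"
    using stack_of_entry by blast
  with snoc show ?case
    by (cases x; cases "stack_of w") (auto simp: stack_of_snoc intro: positions_desc_del_first_type)
qed simp

lemma find_first_type_in_set: "find_first_type i s = Some q \<Longrightarrow> (q, i) \<in> set s"
  by (induction i s rule: find_first_type.induct) (auto split: if_splits)

lemma consumed_in_set: "consumed s x = Some q \<Longrightarrow> \<exists>t. (q, t) \<in> set s"
  by (cases x) (auto dest: find_first_type_in_set split: list.splits)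

lemma consumed_ne_None: "(q, i) \<in> set s \<Longrightarrow> x = Order i \<or> x = Flex \<Longrightarrow> consumed s x \<noteq> None"
proof (induction i s rule: find_first_type.induct)
  case (2 i q t s)
  then show ?case by (cases x) auto
qed simp

lemma step_keeps_unconsumed:
  "e \<in> set s \<Longrightarrow> consumed s x \<noteq> Some (fst e) \<Longrightarrow> e \<in> set (step s j x)"
proof (cases x)
  case (Order i)
  assume "e \<in> set s" "consumed s x \<noteq> Some (fst e)"
  then show ?thesis
    using Order by (induction i s rule: del_first_type.induct) auto
qed (auto split: list.splits)

lemma del_first_type_removes_found:
  "positions_desc s \<Longrightarrow> find_first_type i s = Some q \<Longrightarrow> (q, t) \<notin> set (del_first_type i s)"
proof (induction i s rule: del_first_type.induct)
  case (2 i q' t' s)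
  then show ?case
    by (fastforce split: if_splits dest: find_first_type_in_set)
qed simp

lemma step_removes_consumed:
  "positions_desc s \<Longrightarrow> consumed s x = Some q \<Longrightarrow> (q, t) \<notin> set (step s j x)"
  by (cases x) (auto split: list.splits dest: del_first_type_removes_found)

abbreviation stack_above :: "nat \<Rightarrow> (nat \<times> nat) list \<Rightarrow> (nat \<times> nat) list" where
  "stack_above d s \<equiv> takeWhile (\<lambda>e. d \<le> fst e) s"

definition shift_positions :: "nat \<Rightarrow> (nat \<times> nat) list \<Rightarrow> (nat \<times> nat) list" where
  "shift_positions d s = map (\<lambda>(q, t). (q + d, t)) s"

lemma stack_above_eq_Nil: "\<forall>e \<in> set s. fst e < d \<Longrightarrow> stack_above d s = []"
  by (cases s) auto

lemma stack_above_del_first_type: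
  "positions_desc s \<Longrightarrow> stack_above d (del_first_type i s) = del_first_type i (stack_above d s)"
proof (induction i s rule: del_first_type.induct)
  case (2 i q t s)
  show ?case
  proof (cases "d \<le> q")
    case False
    with "2.prems" have "\<forall>e \<in> set s. fst e < d" by auto
    then show ?thesis
      using False set_del_first_type_subset[of i s] by (auto simp: stack_above_eq_Nil)
  qed (use 2 in auto)
qed simp

lemma stack_above_tl: "positions_desc s \<Longrightarrow> stack_above d (tl s) = tl (stack_above d s)"
  by (cases s) (auto intro!: stack_above_eq_Nil)

lemma del_first_type_shift_positions:
  "del_first_type i (shift_positions d s) = shift_positions d (del_first_type i s)"
  by (induction i s rule: del_first_type.induct) (auto simp: shift_positions_def)

lemma find_first_type_shift_positions:
  "find_first_type i (shift_positions d s) = map_option (\<lambda>q. q + d) (find_first_type i s)"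
  by (induction i s rule: find_first_type.induct) (auto simp: shift_positions_def)

lemma consumed_shift_positions:
  "consumed (shift_positions d s) x = map_option (\<lambda>q. q + d) (consumed s x)"
  by (cases x; cases s)
    (auto simp: shift_positions_def find_first_type_shift_positions[unfolded shift_positions_def])

text \<open>Reading \<open>v\<close> after \<open>u\<close> acts on the entries pushed while reading \<open>v\<close> exactly as
  reading \<open>v\<close> alone: an order only reaches below them when none of them fits.\<close>
lemma stack_above_stack_of_append:
  "stack_above (length u) (stack_of (u @ v)) = shift_positions (length u) (stack_of v)"
proof (induction v rule: rev_induct)
  case Nil
  show ?case
    using stack_of_entry[of _ u] by (simp add: shift_positions_def stack_above_eq_Nil)
next
  case (snoc x v)
  have desc: "positions_desc (stack_of (u @ v))"
    by (rule positions_desc_stack_of)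
  have "stack_of (u @ v @ [x]) = step (stack_of (u @ v)) (length u + length v) x"
    using stack_of_snoc[of "u @ v" x] by simp
  with snoc.IH show ?case
    by (cases x) (simp_all add: stack_of_snoc step_Flex stack_above_del_first_type[OF desc]
        del_first_type_shift_positions[unfolded shift_positions_def] stack_above_tl[OF desc]
        shift_positions_def map_tl
        del: step.simps(3))
qed

lemma find_first_type_stack_above_iff:
  "positions_desc s \<Longrightarrow>
     find_first_type i (stack_above d s) = Some q \<longleftrightarrow> find_first_type i s = Some q \<and> d \<le> q"
proof (induction i s rule: find_first_type.induct)
  case (2 i q' t s)
  then show ?case
    by (auto simp: stack_above_eq_Nil dest!: find_first_type_in_set)
qed simp

lemma consumed_stack_above_iff:
  "positions_desc s \<Longrightarrow>
     consumed (stack_above d s) x = Some q \<longleftrightarrow> consumed s x = Some q \<and> d \<le> q"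
  by (cases x) (auto simp: find_first_type_stack_above_iff split: list.splits)

lemma consumed_stack_of_append_iff:
  "consumed (stack_of (u @ v)) x = Some (q + length u) \<longleftrightarrow> consumed (stack_of v) x = Some q"
proof -
  have "consumed (stack_of (u @ v)) x = Some (q + length u) \<longleftrightarrow>
        consumed (stack_above (length u) (stack_of (u @ v))) x = Some (q + length u)"
    using consumed_stack_above_iff[OF positions_desc_stack_of] by simp
  also have "\<dots> \<longleftrightarrow> consumed (stack_of v) x = Some q"
    by (auto simp: stack_above_stack_of_append consumed_shift_positions)
  finally show ?thesis .
qed

fun rename_type :: "(nat \<Rightarrow> nat) \<Rightarrow> theta \<Rightarrow> theta" where
  "rename_type f (Burger i) = Burger (f i)"
| "rename_type f (Order i) = Order (f i)"
| "rename_type f Flex = Flex"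

context
  fixes f :: "nat \<Rightarrow> nat"
  assumes inj: "inj f"
begin

lemma del_first_type_rename:
  "del_first_type (f i) (map (apsnd f) s) = map (apsnd f) (del_first_type i s)"
  by (induction i s rule: del_first_type.induct) (auto simp: inj_eq[OF inj])

lemma find_first_type_rename: "find_first_type (f i) (map (apsnd f) s) = find_first_type i s"
  by (induction i s rule: find_first_type.induct) (auto simp: inj_eq[OF inj])

lemma consumed_rename: "consumed (map (apsnd f) s) (rename_type f x) = consumed s x"
  by (cases x) (auto simp: find_first_type_rename split: list.splits)

lemma stack_of_rename: "stack_of (map (rename_type f) w) = map (apsnd f) (stack_of w)"
proof (induction w rule: rev_induct)
  case (snoc x w)
  then show ?case
    by (cases x) (auto simp: stack_of_snoc del_first_type_rename split: list.splits)
qed simp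

end

section \<open>Matchings in a bi-infinite word\<close>

definition window :: "(int \<Rightarrow> 'a) \<Rightarrow> int \<Rightarrow> nat \<Rightarrow> 'a list" where
  "window X a L = map (\<lambda>j. X (a + int j)) [0..<L]"

lemma length_window [simp]: "length (window X a L) = L"
  by (simp add: window_def)

lemma window_add: "window X a (L1 + L2) = window X a L1 @ window X (a + int L1) L2"
  by (rule nth_equalityI) (auto simp: window_def nth_append add.assoc)

lemma window_Suc: "window X a (Suc L) = window X a L @ [X (a + int L)]"
  by (simp add: window_def)

lemma matched_iff_window:
  "matched X m n \<longleftrightarrow> m < n \<and> consumed (stack_of (window X m (nat (n - m)))) (X n) = Some 0"
  by (simp add: matched_def window_def)

lemma matched_imp_less: "matched X m n \<Longrightarrow> m < n"
  by (simp add: matched_def)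

lemma matched_imp_burger: "matched X m n \<Longrightarrow> is_burger (X m)"
proof -
  assume "matched X m n"
  then have "m < n" and "consumed (stack_of (window X m (nat (n - m)))) (X n) = Some 0"
    by (auto simp: matched_iff_window)
  then show ?thesis
    using stack_of_entry consumed_in_set by (fastforce simp: window_def is_burger_def)
qed

lemma matched_imp_not_burger: "matched X m n \<Longrightarrow> \<not> is_burger (X n)"
  by (cases "X n") (auto simp: matched_def is_burger_def)

lemma matched_left_unique:
  assumes "matched X l n" and "matched X l' n"
  shows "l = l'"
proof -
  have False if "matched X l n" "matched X l' n" "l < l'" for l l'
  proof -
    define d where "d = nat (l' - l)"
    have "window X l (nat (n - l)) = window X l d @ window X l' (nat (n - l'))"
      using that window_add[of X l d "nat (n - l')"]
      by (simp add: d_def matched_def nat_add_distrib[symmetric])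
    then have "consumed (stack_of (window X l (nat (n - l)))) (X n) = Some (0 + d)"
      using that(2) consumed_stack_of_append_iff[of "window X l d" _ _ 0]
      by (simp add: matched_iff_window)
    with that(1,3) show False
      by (simp add: matched_iff_window d_def)
  qed
  with assms show ?thesis
    by (metis linorder_neqE)
qed

text \<open>Once \<open>X n\<close> has consumed \<open>X m\<close>, position \<open>m\<close> is never pushed again.\<close>
lemma matched_right_unique:
  assumes "matched X m n" and "matched X m n'"
  shows "n = n'"
proof -
  have False if first: "matched X m n" and second: "matched X m n'" and "n < n'" for n n'
  proof -
    define L where "L = nat (n - m)"
    define L' where "L' = nat (n' - m)"
    have "m < n" using first by (rule matched_imp_less)
    have consumed: "consumed (stack_of (window X m L)) (X n) = Some 0"
      using first by (simp add: matched_iff_window L_def)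
    have gone: "(0, t) \<notin> set (stack_of (window X m (Suc L)))" for t
      using step_removes_consumed[OF positions_desc_stack_of consumed] \<open>m < n\<close>
      by (simp add: window_Suc stack_of_snoc L_def)
    have "window X m L' = window X m (Suc L) @ window X (m + int (Suc L)) (L' - Suc L)"
      using window_add[of X m "Suc L" "L' - Suc L"] \<open>n < n'\<close> \<open>m < n\<close>
      by (simp add: L_def L'_def)
    moreover obtain t where "(0, t) \<in> set (stack_of (window X m L'))"
      using second consumed_in_set by (fastforce simp: matched_iff_window L'_def)
    ultimately show False
      using gone stack_of_append_low by fastforce
  qed
  with assms show ?thesis
    by (metis linorder_neqE)
qed

lemma unmatched_burger_in_stack:
  assumes "X a = Burger j" and "\<And>n. \<not> matched X a n" and "0 < L"
  shows "(0, j) \<in> set (stack_of (window X a L))"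
  using assms(3)
proof (induction L)
  case (Suc L)
  show ?case
  proof (cases "L = 0")
    case True
    then show ?thesis using assms(1) by (simp add: window_def stack_of_def)
  next
    case False
    have "consumed (stack_of (window X a L)) (X (a + int L)) \<noteq> Some 0"
      using assms(2)[of "a + int L"] False by (simp add: matched_iff_window)
    with Suc.IH False show ?thesis
      using step_keeps_unconsumed[of "(0, j)"] by (simp add: window_Suc stack_of_snoc)
  qed
qed simp

text \<open>The unconsumed burger stays on the stack, so the order consumes it or a more recent
  burger.\<close>
lemma unmatched_burger_forces_match:
  assumes "X a = Burger j" and "\<And>n. \<not> matched X a n" and "a < n"
    and "X n = Order j \<or> X n = Flex"
  shows "\<exists>l. matched X l n"
proof -
  define L where "L = nat (n - a)"
  have "(0, j) \<in> set (stack_of (window X a L))"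
    using unmatched_burger_in_stack[OF assms(1,2)] assms(3) by (simp add: L_def)
  then obtain q where q: "consumed (stack_of (window X a L)) (X n) = Some q"
    using consumed_ne_None[OF _ assms(4)] by blast
  then have "q < L"
    using consumed_in_set stack_of_entry by fastforce
  then have "window X a L = window X a q @ window X (a + int q) (L - q)"
    using window_add[of X a q "L - q"] by simp
  with q have "consumed (stack_of (window X (a + int q) (L - q))) (X n) = Some 0"
    using consumed_stack_of_append_iff[of "window X a q" _ _ 0] by simp
  moreover have "nat (n - (a + int q)) = L - q" and "a + int q < n"
    using \<open>q < L\<close> by (simp_all add: L_def)
  ultimately have "matched X (a + int q) n"
    by (simp add: matched_iff_window)
  then show ?thesis ..
qed

lemma matched_cong:
  assumes "\<And>i. m \<le> i \<Longrightarrow> i \<le> n \<Longrightarrow> X i = Y i"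
  shows "matched X m n \<longleftrightarrow> matched Y m n"
proof (cases "m < n")
  case True
  then have "window X m (nat (n - m)) = window Y m (nat (n - m))" and "X n = Y n"
    by (auto simp: window_def intro!: assms)
  then show ?thesis by (simp add: matched_iff_window)
qed (simp add: matched_def)

definition translate :: "int \<Rightarrow> (int \<Rightarrow> 'a) \<Rightarrow> int \<Rightarrow> 'a" where
  "translate c X = (\<lambda>i. X (i + c))"

lemma translate_apply [simp]: "translate c X i = X (i + c)"
  by (simp add: translate_def)

lemma matched_translate: "matched (translate c X) m n \<longleftrightarrow> matched X (m + c) (n + c)"
  by (simp add: matched_def algebra_simps)

lemma phi_finite_translate: "phi_finite (translate c X) 0 \<longleftrightarrow> phi_finite X c"
  unfolding phi_finite_def matched_translate
  by (metis add.commute add.right_neutral diff_add_cancel translate_apply)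

lemma matched_rename: "inj f \<Longrightarrow> matched (rename_type f \<circ> X) m n \<longleftrightarrow> matched X m n"
proof -
  assume "inj f"
  have "window (rename_type f \<circ> X) m L = map (rename_type f) (window X m L)" for L
    by (simp add: window_def)
  with \<open>inj f\<close> show ?thesis
    by (simp add: matched_iff_window stack_of_rename consumed_rename)
qed

section \<open>I.i.d. sequences indexed by the integers\<close>

lemma (in prob_space) prob_mult_le_if_disjoint_inside:
  assumes "U \<subseteq> A" "W \<subseteq> B" "U \<inter> W = {}"
    and "U \<in> events" "W \<in> events" "A \<in> events" "B \<in> events"
    and "prob (A \<inter> B) = prob A * prob B"
  shows "prob U * prob W \<le> (prob A - prob U) + (prob B - prob W)"
proof -
  have "prob U * prob W \<le> prob A * prob B"
    using assms by (intro mult_mono finite_measure_mono) auto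
  also have "\<dots> = prob (A \<inter> B)"
    using assms(8) by simp
  also have "\<dots> \<le> prob ((A - U) \<union> (B - W))"
    using assms by (intro finite_measure_mono) auto
  also have "\<dots> \<le> prob (A - U) + prob (B - W)"
    using assms by (intro measure_Un_le) auto
  also have "\<dots> = (prob A - prob U) + (prob B - prob W)"
    using assms by (simp add: finite_measure_Diff)
  finally show ?thesis .
qed

definition determined_by :: "(int \<Rightarrow> 'a) set \<Rightarrow> int set \<Rightarrow> bool" where
  "determined_by E J \<longleftrightarrow> (\<forall>X Y. (\<forall>i\<in>J. X i = Y i) \<longrightarrow> (X \<in> E \<longleftrightarrow> Y \<in> E))"

lemma determined_by_translate:
  "determined_by E J \<Longrightarrow> determined_by (translate c -` E) ((\<lambda>i. i + c) ` J)"
  unfolding determined_by_def by (metis (mono_tags, lifting) image_eqI translate_apply vimage_eq)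

locale iid_seq =
  fixes D :: "'a::countable pmf"
begin

abbreviation M :: "(int \<Rightarrow> 'a) measure" where
  "M \<equiv> \<Pi>\<^sub>M i\<in>UNIV. measure_pmf D"

sublocale prob_space M
  by (rule prob_space_PiM) (rule measure_pmf.prob_space_axioms)

lemma space_M [simp]: "space M = UNIV"
  by (simp add: space_PiM)

lemma measurable_coordinate: "(\<lambda>X. X i) \<in> measurable M (measure_pmf D)"
  by (rule measurable_component_singleton) simp

lemma sets_coordinate [intro, simp]: "{X. P (X i)} \<in> sets M"
  using measurable_sets[OF measurable_coordinate, of "{x. P x}" i] by (simp add: vimage_def)

lemma sets_map_coordinates [intro, simp]: "{X. Q (map X js)} \<in> sets M"
proof -
  have "{X. map X js = w} \<in> sets M" for w
  proof (induction js arbitrary: w)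
    case (Cons j js)
    then show ?case
      by (cases w) (simp_all add: Collect_conj_eq sets.Int)
  qed (use sets.top[of M] in \<open>cases w; simp\<close>)
  then have "(\<lambda>X. map X js) \<in> measurable M (count_space UNIV)"
    by (subst measurable_count_space_eq2_countable) (auto simp: vimage_def)
  from measurable_sets[OF this, of "{x. Q x}"] show ?thesis
    by (simp add: vimage_def)
qed

lemma distr_coordinate: "distr M (measure_pmf D) (\<lambda>X. X i) = measure_pmf D"
  by (rule distr_PiM_component) (auto intro: measure_pmf.prob_space_axioms)

lemma prob_coordinate: "prob {X. X i \<in> S} = measure_pmf.prob D S"
  using measure_distr[OF measurable_coordinate, of S i] by (simp add: distr_coordinate vimage_def)

lemma AE_coordinate_in_support: "AE X in M. X i \<in> set_pmf D"
  by (rule AE_distrD[OF measurable_coordinate, unfolded distr_coordinate, OF AE_measure_pmf])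

lemma measurable_translate: "translate c \<in> measurable M M"
  unfolding translate_def
  by (rule measurable_PiM_single') (auto intro: measurable_coordinate)

lemma distr_translate: "distr M M (translate c) = M"
  using distr_PiM_reindex[of UNIV "\<lambda>_. measure_pmf D" "\<lambda>i. i + c" UNIV]
  by (simp add: measure_pmf.prob_space_axioms inj_on_def translate_def[abs_def] restrict_UNIV)

lemma sets_translate: "E \<in> sets M \<Longrightarrow> translate c -` E \<in> sets M"
  using measurable_sets[OF measurable_translate] by simp

lemma prob_translate: "E \<in> sets M \<Longrightarrow> prob (translate c -` E) = prob E"
  using measure_distr[OF measurable_translate] by (simp add: distr_translate)

lemma AE_translate: "(AE X in M. P X) \<Longrightarrow> AE X in M. P (translate c X)"
  by (rule AE_distrD[OF measurable_translate, unfolded distr_translate])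

lemma indep_coordinates: "indep_vars (\<lambda>_. measure_pmf D) (\<lambda>i X. X i) UNIV"
  by (subst indep_vars_iff_distr_eq_PiM)
    (auto intro: measurable_coordinate simp: distr_coordinate restrict_UNIV distr_id2)

lemma determined_by_vimage_restrict:
  assumes "E \<in> sets M" and "determined_by E J"
  shows "\<exists>E' \<in> sets (\<Pi>\<^sub>M i\<in>J. measure_pmf D). E = (\<lambda>X. restrict X J) -` E'"
proof
  define extend where "extend f i = (if i \<in> J then f i else undefined)" for f :: "int \<Rightarrow> 'a" and i
  have "extend \<in> measurable (\<Pi>\<^sub>M i\<in>J. measure_pmf D) M"
  proof (rule measurable_PiM_single')
    show "(\<lambda>f. extend f i) \<in> measurable (\<Pi>\<^sub>M i\<in>J. measure_pmf D) (measure_pmf D)" for i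
      by (cases "i \<in> J") (auto simp: extend_def intro: measurable_component_singleton)
  qed auto
  then show "extend -` E \<inter> space (\<Pi>\<^sub>M i\<in>J. measure_pmf D) \<in> sets (\<Pi>\<^sub>M i\<in>J. measure_pmf D)"
    using assms(1) by (rule measurable_sets)
  have "X \<in> E \<longleftrightarrow> extend (restrict X J) \<in> E" for X
    using assms(2) by (auto simp: determined_by_def extend_def)
  then show "E = (\<lambda>X. restrict X J) -` (extend -` E \<inter> space (\<Pi>\<^sub>M i\<in>J. measure_pmf D))"
    by (auto simp: space_PiM)
qed

lemma prob_Int_determined:
  assumes "A \<in> sets M" "determined_by A I" and "B \<in> sets M" "determined_by B J"
    and "I \<inter> J = {}"
  shows "prob (A \<inter> B) = prob A * prob B"
proof -
  obtain A' B' where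
    A': "A' \<in> sets (\<Pi>\<^sub>M i\<in>I. measure_pmf D)" "A = (\<lambda>X. restrict X I) -` A'" and
    B': "B' \<in> sets (\<Pi>\<^sub>M i\<in>J. measure_pmf D)" "B = (\<lambda>X. restrict X J) -` B'"
    using determined_by_vimage_restrict assms by metis
  have "indep_var (\<Pi>\<^sub>M i\<in>I. measure_pmf D) (\<lambda>X. restrict X I)
                  (\<Pi>\<^sub>M i\<in>J. measure_pmf D) (\<lambda>X. restrict X J)"
    using indep_var_restrict[OF indep_coordinates assms(5)] by simp
  from indep_varD[OF this A'(1) B'(1)] A'(2) B'(2) show ?thesis
    by (simp add: vimage_def Int_def)
qed

lemma prob_map_coordinates:
  assumes "map_pmf f D = D" and "E \<in> sets M"
  shows "prob ((\<lambda>X. f \<circ> X) -` E) = prob E"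
proof -
  have f: "f \<in> measurable (measure_pmf D) (measure_pmf D)"
    by simp
  have "distr (measure_pmf D) (measure_pmf D) f = distr (measure_pmf D) (count_space UNIV) f"
    by (rule distr_cong) auto
  with assms(1) have distr_f: "distr (measure_pmf D) (measure_pmf D) f = measure_pmf D"
    by (metis map_pmf_rep_eq)
  have rv: "(\<lambda>X. f (X i)) \<in> measurable M (measure_pmf D)" for i
    by (rule measurable_compose[OF measurable_coordinate f])
  have "distr M (measure_pmf D) (\<lambda>X. f (X i)) = measure_pmf D" for i
    using distr_distr[OF f measurable_coordinate, of i] by (simp add: comp_def distr_coordinate distr_f)
  moreover have "indep_vars (\<lambda>_. measure_pmf D) (\<lambda>i X. f (X i)) UNIV"
    using indep_vars_compose2[OF indep_coordinates, of "\<lambda>_. f"] by simp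
  ultimately have distr: "distr M M (\<lambda>X. f \<circ> X) = M"
    using rv by (subst (asm) indep_vars_iff_distr_eq_PiM) (auto simp: restrict_UNIV comp_def)
  have "(\<lambda>X. f \<circ> X) \<in> measurable M M"
    unfolding comp_def by (rule measurable_PiM_single') (auto intro: rv)
  from measure_distr[OF this assms(2)] show ?thesis
    by (simp add: distr)
qed

text \<open>Mixing: for \<open>c = 2 L + 1\<close> the events \<open>A L\<close> and \<open>translate c -` B L\<close> depend on
  disjoint windows, hence are independent, and their intersection lies in the approximation
  errors \<open>A L - U\<close> and \<open>translate c -` (B L - W)\<close>.\<close>
lemma prob_mult_eq_0_if_disjoint_translates:
  assumes A: "decseq A" "(\<Inter>L. A L) = U" "\<And>L. A L \<in> sets M" "\<And>L. determined_by (A L) {0..int L}"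
    and B: "decseq B" "(\<Inter>L. B L) = W" "\<And>L. B L \<in> sets M" "\<And>L. determined_by (B L) {- int L..0}"
    and disjoint: "\<And>c. 0 < c \<Longrightarrow> U \<inter> translate c -` W = {}"
  shows "prob U * prob W = 0"
proof -
  have U: "U \<in> sets M" and W: "W \<in> sets M"
    using A B by auto
  have limA: "(\<lambda>L. prob (A L)) \<longlonglongrightarrow> prob U"
    using A by (auto intro: finite_Lim_measure_decseq)
  have limB: "(\<lambda>L. prob (B L)) \<longlonglongrightarrow> prob W"
    using B by (auto intro: finite_Lim_measure_decseq)
  have bound: "prob U * prob W \<le> (prob (A L) - prob U) + (prob (B L) - prob W)" for L
  proof -
    define c where "c = 2 * int L + 1"
    have "{0..int L} \<inter> (\<lambda>i. i + c) ` {- int L..0} = {}"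
      by (auto simp: c_def)
    from prob_Int_determined[OF A(3,4) sets_translate[OF B(3)] determined_by_translate[OF B(4)] this]
    have "prob U * prob (translate c -` W) \<le>
         (prob (A L) - prob U) + (prob (translate c -` B L) - prob (translate c -` W))"
      using U W A B disjoint[of c]
      by (intro prob_mult_le_if_disjoint_inside) (auto simp: c_def sets_translate)
    then show ?thesis
      using U W B by (simp add: prob_translate)
  qed
  have "(\<lambda>L. (prob (A L) - prob U) + (prob (B L) - prob W))
          \<longlonglongrightarrow> (prob U - prob U) + (prob W - prob W)"
    by (intro tendsto_intros limA limB)
  then have "prob U * prob W \<le> 0"
    using bound LIMSEQ_le_const by fastforce
  then show ?thesis
    using measure_nonneg[of M U] measure_nonneg[of M W] by (metis mult_nonneg_nonneg order.antisym)
qed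

end

section \<open>Unconsumed burgers and unmatched orders\<close>

instance theta :: countable
  by countable_datatype

definition unmatched_burgers :: "(int \<Rightarrow> theta) set" where
  "unmatched_burgers = {X. is_burger (X 0)} - (\<Union>n. {X. matched X 0 n})"

definition unmatched_orders :: "(int \<Rightarrow> theta) set" where
  "unmatched_orders = {X. \<not> is_burger (X 0)} - (\<Union>l. {X. matched X l 0})"

definition unmatched_burger :: "nat \<Rightarrow> (int \<Rightarrow> theta) set" where
  "unmatched_burger j = {X. X 0 = Burger j} - (\<Union>n. {X. matched X 0 n})"

definition unmatched_order :: "nat \<Rightarrow> (int \<Rightarrow> theta) set" where
  "unmatched_order j = {X. X 0 = Order j \<or> X 0 = Flex} - (\<Union>l. {X. matched X l 0})"

definition unmatched_burger_upto :: "nat \<Rightarrow> nat \<Rightarrow> (int \<Rightarrow> theta) set" where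
  "unmatched_burger_upto j L = {X. X 0 = Burger j} - (\<Union>n\<in>{1..int L}. {X. matched X 0 n})"

definition unmatched_order_since :: "nat \<Rightarrow> nat \<Rightarrow> (int \<Rightarrow> theta) set" where
  "unmatched_order_since j L =
     {X. X 0 = Order j \<or> X 0 = Flex} - (\<Union>l\<in>{- int L..<0}. {X. matched X l 0})"

lemma phi_finite_0_iff: "phi_finite X 0 \<longleftrightarrow> X \<notin> unmatched_burgers \<union> unmatched_orders"
  by (auto simp: phi_finite_def unmatched_burgers_def unmatched_orders_def)

lemma UN_matched_later: "(\<Union>n. {X. matched X 0 n}) = (\<Union>d. {X. matched X 0 (int d + 1)})"
proof (intro equalityI subsetI)
  fix X assume "X \<in> (\<Union>n. {X. matched X 0 n})"
  then obtain n where "matched X 0 n" by blast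
  moreover from this have "0 < n" by (rule matched_imp_less)
  ultimately have "X \<in> {X. matched X 0 (int (nat (n - 1)) + 1)}"
    by simp
  then show "X \<in> (\<Union>d. {X. matched X 0 (int d + 1)})" by blast
qed auto

lemma UN_matched_earlier: "(\<Union>l. {X. matched X l 0}) = (\<Union>d. {X. matched X (- int d - 1) 0})"
proof (intro equalityI subsetI)
  fix X assume "X \<in> (\<Union>l. {X. matched X l 0})"
  then obtain l where "matched X l 0" by blast
  moreover from this have "l < 0" by (rule matched_imp_less)
  ultimately have "X \<in> {X. matched X (- int (nat (- l - 1)) - 1) 0}"
    by simp
  then show "X \<in> (\<Union>d. {X. matched X (- int d - 1) 0})" by blast
qed auto

lemma decseq_unmatched_burger_upto: "decseq (unmatched_burger_upto j)"
  by (auto simp: decseq_def unmatched_burger_upto_def)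

lemma decseq_unmatched_order_since: "decseq (unmatched_order_since j)"
  by (auto simp: decseq_def unmatched_order_since_def)

lemma INT_unmatched_burger_upto: "(\<Inter>L. unmatched_burger_upto j L) = unmatched_burger j"
proof (intro equalityI subsetI)
  fix X assume X: "X \<in> (\<Inter>L. unmatched_burger_upto j L)"
  have "\<not> matched X 0 n" for n
    using X[THEN INT_D, of "nat n"] matched_imp_less[of X 0 n] by (auto simp: unmatched_burger_upto_def)
  with X show "X \<in> unmatched_burger j"
    by (auto simp: unmatched_burger_upto_def unmatched_burger_def)
qed (auto simp: unmatched_burger_upto_def unmatched_burger_def)

lemma INT_unmatched_order_since: "(\<Inter>L. unmatched_order_since j L) = unmatched_order j"
proof (intro equalityI subsetI)
  fix X assume X: "X \<in> (\<Inter>L. unmatched_order_since j L)"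
  have "\<not> matched X l 0" for l
    using X[THEN INT_D, of "nat (- l)"] matched_imp_less[of X l 0]
    by (auto simp: unmatched_order_since_def)
  with X show "X \<in> unmatched_order j"
    by (auto simp: unmatched_order_since_def unmatched_order_def)
qed (auto simp: unmatched_order_since_def unmatched_order_def)

lemma determined_by_unmatched_burger_upto: "determined_by (unmatched_burger_upto j L) {0..int L}"
  unfolding determined_by_def
proof (intro allI impI)
  fix X Y :: "int \<Rightarrow> theta" assume "\<forall>i\<in>{0..int L}. X i = Y i"
  then have "X 0 = Y 0" and "\<forall>n\<in>{1..int L}. matched X 0 n \<longleftrightarrow> matched Y 0 n"
    by (auto intro!: matched_cong)
  then show "X \<in> unmatched_burger_upto j L \<longleftrightarrow> Y \<in> unmatched_burger_upto j L"
    by (auto simp: unmatched_burger_upto_def)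
qed

lemma determined_by_unmatched_order_since: "determined_by (unmatched_order_since j L) {- int L..0}"
  unfolding determined_by_def
proof (intro allI impI)
  fix X Y :: "int \<Rightarrow> theta" assume "\<forall>i\<in>{- int L..0}. X i = Y i"
  then have "X 0 = Y 0" and "\<forall>l\<in>{- int L..<0}. matched X l 0 \<longleftrightarrow> matched Y l 0"
    by (auto intro!: matched_cong)
  then show "X \<in> unmatched_order_since j L \<longleftrightarrow> Y \<in> unmatched_order_since j L"
    by (auto simp: unmatched_order_since_def)
qed

lemma unmatched_burger_disjoint_translate:
  assumes "0 < c"
  shows "unmatched_burger j \<inter> translate c -` unmatched_order j = {}"
proof -
  have False if burger: "X \<in> unmatched_burger j" and order: "translate c X \<in> unmatched_order j" for X
  proof -
    have "\<not> matched X l c" for l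
      using order[unfolded unmatched_order_def] matched_translate[of c X "l - c" 0] by auto
    then show False
      using unmatched_burger_forces_match[of X 0 j c] burger order \<open>0 < c\<close>
      by (auto simp: unmatched_burger_def unmatched_order_def)
  qed
  then show ?thesis by blast
qed

locale burger_word = iid_seq "theta_pmf k p" for k :: nat and p :: real +
  assumes k_pos: "0 < k"
begin

lemma sets_matched [intro, simp]: "{X. matched X m n} \<in> sets M"
proof -
  define js where "js = map (\<lambda>j. m + int j) [0..<nat (n - m)] @ [n]"
  have "matched X m n \<longleftrightarrow> m < n \<and> consumed (stack_of (butlast (map X js))) (last (map X js)) = Some 0"
    for X
    by (simp add: js_def matched_def butlast_append comp_def)
  then show ?thesis
    using sets_map_coordinates[of "\<lambda>w. m < n \<and> consumed (stack_of (butlast w)) (last w) = Some 0" js]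
    by simp
qed

lemma sets_matched_UN [intro, simp]:
  "(\<Union>n. {X. matched X m n}) \<in> sets M" "(\<Union>l. {X. matched X l n}) \<in> sets M"
  by (auto intro: sets.countable_UN)

lemma sets_unmatched [intro, simp]:
  "unmatched_burgers \<in> sets M" "unmatched_orders \<in> sets M"
  "unmatched_burger j \<in> sets M" "unmatched_order j \<in> sets M"
  by (auto simp: unmatched_burgers_def unmatched_orders_def unmatched_burger_def
      unmatched_order_def)

lemma sets_unmatched_window [intro, simp]:
  "unmatched_burger_upto j L \<in> sets M" "unmatched_order_since j L \<in> sets M"
  by (auto simp: unmatched_burger_upto_def unmatched_order_since_def intro!: sets.Diff sets.finite_UN)

lemma type_less_if_in_set_pmf:
  "Burger i \<in> set_pmf (theta_pmf k p) \<Longrightarrow> i < k"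
  "Order i \<in> set_pmf (theta_pmf k p) \<Longrightarrow> i < k"
proof -
  have "set_pmf (pmf_of_set {..<k}) = {..<k}"
    using k_pos by (intro set_pmf_of_set) auto
  then show "Burger i \<in> set_pmf (theta_pmf k p) \<Longrightarrow> i < k"
    and "Order i \<in> set_pmf (theta_pmf k p) \<Longrightarrow> i < k"
    by (auto simp: theta_pmf_def set_bind_pmf split: if_splits)
qed

lemma prob_is_burger: "prob {X. is_burger (X i) = b} = 1 / 2"
proof -
  have "map_pmf is_burger (map_pmf Burger (pmf_of_set {..<k})) = return_pmf True"
    and "map_pmf is_burger (map_pmf Order (pmf_of_set {..<k})) = return_pmf False"
    by (simp_all add: pmf.map_comp comp_def is_burger_def)
  moreover have "(\<lambda>b. if b then return_pmf True else return_pmf False) = return_pmf"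
    by (simp add: fun_eq_iff)
  ultimately have is_burger: "map_pmf is_burger (theta_pmf k p) = bernoulli_pmf (1 / 2)"
    by (simp add: theta_pmf_def map_bind_pmf if_distrib[of "map_pmf is_burger"] bind_pmf_const
        bind_return_pmf' is_burger_def cong: if_cong)
  have "prob {X. is_burger (X i) = b} = measure_pmf.prob (theta_pmf k p) (is_burger -` {b})"
    using prob_coordinate[of i "is_burger -` {b}"] by simp
  also have "\<dots> = pmf (map_pmf is_burger (theta_pmf k p)) b"
    by (simp add: measure_map_pmf[symmetric] measure_pmf_single)
  also have "\<dots> = 1 / 2"
    using is_burger by (cases b) simp_all
  finally show ?thesis .
qed

lemma map_pmf_rename_theta_pmf:
  assumes "f permutes {..<k}"
  shows "map_pmf (rename_type f) (theta_pmf k p) = theta_pmf k p"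
proof -
  have "map_pmf f (pmf_of_set {..<k}) = pmf_of_set {..<k}"
    using assms k_pos
    by (simp add: map_pmf_of_set_inj permutes_inj_on permutes_image lessThan_empty_iff)
  moreover have "map_pmf (rename_type f) (map_pmf C P) = map_pmf C (map_pmf f P)"
    if "\<And>i. rename_type f (C i) = C (f i)" for C and P :: "nat pmf"
    using that by (simp add: pmf.map_comp comp_def)
  ultimately have "map_pmf (rename_type f) (map_pmf C (pmf_of_set {..<k})) = map_pmf C (pmf_of_set {..<k})"
    if "\<And>i. rename_type f (C i) = C (f i)" for C
    using that by simp
  then show ?thesis
    unfolding theta_pmf_def map_bind_pmf
    by (intro bind_pmf_cong refl) (auto simp: map_bind_pmf intro!: bind_pmf_cong)
qed

lemma prob_unmatched_burger: "j < k \<Longrightarrow> prob (unmatched_burger j) = prob (unmatched_burger 0)"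
proof -
  assume "j < k"
  define f where "f = Transposition.transpose 0 j"
  have perm: "f permutes {..<k}"
    using \<open>j < k\<close> k_pos by (simp add: f_def permutes_swap_id)
  have "(\<lambda>X. rename_type f \<circ> X) -` unmatched_burger 0 = unmatched_burger j"
  proof -
    have "rename_type f x = Burger 0 \<longleftrightarrow> x = Burger j" for x
      by (cases x) (auto simp: f_def Transposition.transpose_def)
    moreover have "f j = 0"
      by (simp add: f_def Transposition.transpose_def)
    ultimately show ?thesis
      by (auto simp: unmatched_burger_def matched_rename[OF permutes_inj[OF perm]])
  qed
  with prob_map_coordinates[OF map_pmf_rename_theta_pmf[OF perm] sets_unmatched(3)[of 0]]
  show ?thesis by simp
qed

lemma prob_unmatched_burger_mult_order: "prob (unmatched_burger j) * prob (unmatched_order j) = 0"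
  by (rule prob_mult_eq_0_if_disjoint_translates[OF decseq_unmatched_burger_upto
        INT_unmatched_burger_upto sets_unmatched_window(1) determined_by_unmatched_burger_upto
        decseq_unmatched_order_since INT_unmatched_order_since sets_unmatched_window(2)
        determined_by_unmatched_order_since unmatched_burger_disjoint_translate])

text \<open>Mass transport: by translation invariance, \<open>X 0\<close> is consumed at distance \<open>d\<close> as
  likely as it consumes a burger at distance \<open>d\<close>.\<close>
lemma prob_matched_later_eq_earlier:
  "prob (\<Union>n. {X. matched X 0 n}) = prob (\<Union>l. {X. matched X l 0})"
proof -
  define F where "F d = {X. matched X 0 (int d + 1)}" for d :: nat
  define G where "G d = {X. matched X (- int d - 1) 0}" for d :: nat
  have "(\<lambda>d. prob (F d)) sums prob (\<Union>d. F d)"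
    by (rule finite_measure_UNION)
      (auto simp: F_def disjoint_family_on_def dest: matched_right_unique)
  moreover have "(\<lambda>d. prob (G d)) sums prob (\<Union>d. G d)"
    by (rule finite_measure_UNION)
      (auto simp: G_def disjoint_family_on_def dest: matched_left_unique)
  moreover have "prob (G d) = prob (F d)" for d
  proof -
    have "G d = translate (- int d - 1) -` F d"
      by (auto simp: F_def G_def matched_translate)
    moreover have "F d \<in> sets M"
      by (simp add: F_def)
    ultimately show ?thesis
      by (simp add: prob_translate)
  qed
  ultimately show ?thesis
    unfolding F_def G_def UN_matched_later UN_matched_earlier by (simp add: sums_unique2)
qed

lemma prob_unmatched_burgers_eq_orders: "prob unmatched_burgers = prob unmatched_orders"
proof -
  have "prob unmatched_burgers = prob {X. is_burger (X 0)} - prob (\<Union>n. {X. matched X 0 n})"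
    unfolding unmatched_burgers_def using matched_imp_burger by (intro finite_measure_Diff) auto
  moreover have "prob unmatched_orders = prob {X. \<not> is_burger (X 0)} - prob (\<Union>l. {X. matched X l 0})"
    unfolding unmatched_orders_def using matched_imp_not_burger by (intro finite_measure_Diff) auto
  moreover have "prob {X. is_burger (X 0)} = prob {X. \<not> is_burger (X 0)}"
    using prob_is_burger[of 0 True] prob_is_burger[of 0 False] by simp
  ultimately show ?thesis
    by (simp add: prob_matched_later_eq_earlier)
qed

lemma prob_unmatched_burgers_le: "prob unmatched_burgers \<le> k * prob (unmatched_burger 0)"
proof -
  have covered: "X \<in> (\<Union>j<k. unmatched_burger j)"
    if "X \<in> unmatched_burgers" and "X 0 \<in> set_pmf (theta_pmf k p)" for X
  proof (cases "X 0")
    case (Burger j)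
    with that show ?thesis
      by (auto simp: unmatched_burgers_def unmatched_burger_def dest: type_less_if_in_set_pmf)
  qed (use that in \<open>simp_all add: unmatched_burgers_def is_burger_def\<close>)
  have "AE X in M. X \<in> unmatched_burgers \<longrightarrow> X \<in> (\<Union>j<k. unmatched_burger j)"
    using AE_coordinate_in_support[of 0]
  proof (rule eventually_mono)
    fix X :: "int \<Rightarrow> theta" assume "X 0 \<in> set_pmf (theta_pmf k p)"
    then show "X \<in> unmatched_burgers \<longrightarrow> X \<in> (\<Union>j<k. unmatched_burger j)"
      using covered by blast
  qed
  moreover have "(\<Union>j<k. unmatched_burger j) \<in> sets M"
    by (intro sets.finite_UN) auto
  ultimately have "prob unmatched_burgers \<le> prob (\<Union>j<k. unmatched_burger j)"
    by (rule finite_measure_mono_AE)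
  also have "\<dots> \<le> (\<Sum>j<k. prob (unmatched_burger j))"
    by (intro finite_measure_subadditive_finite) auto
  also have "\<dots> = (\<Sum>j<k. prob (unmatched_burger 0))"
    by (intro sum.cong refl) (rule prob_unmatched_burger, simp)
  finally show ?thesis
    by simp
qed

lemma prob_unmatched_orders_le: "prob unmatched_orders \<le> (\<Sum>j<k. prob (unmatched_order j))"
proof -
  have covered: "X \<in> (\<Union>j<k. unmatched_order j)"
    if "X \<in> unmatched_orders" and "X 0 \<in> set_pmf (theta_pmf k p)" for X
  proof (cases "X 0")
    case (Order j)
    with that show ?thesis
      by (auto simp: unmatched_orders_def unmatched_order_def dest: type_less_if_in_set_pmf)
  next
    case Flex
    with that k_pos show ?thesis
      by (auto simp: unmatched_orders_def unmatched_order_def)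
  qed (use that in \<open>simp add: unmatched_orders_def is_burger_def\<close>)
  have "AE X in M. X \<in> unmatched_orders \<longrightarrow> X \<in> (\<Union>j<k. unmatched_order j)"
    using AE_coordinate_in_support[of 0]
  proof (rule eventually_mono)
    fix X :: "int \<Rightarrow> theta" assume "X 0 \<in> set_pmf (theta_pmf k p)"
    then show "X \<in> unmatched_orders \<longrightarrow> X \<in> (\<Union>j<k. unmatched_order j)"
      using covered by blast
  qed
  moreover have "(\<Union>j<k. unmatched_order j) \<in> sets M"
    by (intro sets.finite_UN) auto
  ultimately have "prob unmatched_orders \<le> prob (\<Union>j<k. unmatched_order j)"
    by (rule finite_measure_mono_AE)
  also have "\<dots> \<le> (\<Sum>j<k. prob (unmatched_order j))"
    by (intro finite_measure_subadditive_finite) auto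
  finally show ?thesis .
qed

lemma prob_unmatched_burgers: "prob unmatched_burgers = 0"
proof -
  have "prob unmatched_burgers * prob unmatched_orders \<le>
          (k * prob (unmatched_burger 0)) * (\<Sum>j<k. prob (unmatched_order j))"
    using prob_unmatched_burgers_le prob_unmatched_orders_le
    by (intro mult_mono) (auto intro: sum_nonneg)
  also have "\<dots> = k * (\<Sum>j<k. prob (unmatched_burger j) * prob (unmatched_order j))"
    unfolding sum_distrib_left by (intro arg_cong[where f = "(*) (real k)"] sum.cong refl)
      (subst prob_unmatched_burger, simp_all)
  also have "\<dots> = 0"
    by (simp add: prob_unmatched_burger_mult_order)
  finally have "prob unmatched_burgers * prob unmatched_burgers \<le> 0"
    by (simp add: prob_unmatched_burgers_eq_orders)
  then show ?thesis
    using measure_nonneg[of M unmatched_burgers] by (auto simp: mult_le_0_iff)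
qed

lemma AE_phi_finite_0: "AE X in M. phi_finite X 0"
proof -
  have "prob (unmatched_burgers \<union> unmatched_orders) \<le> prob unmatched_burgers + prob unmatched_orders"
    by (intro measure_Un_le) auto
  then have "prob (unmatched_burgers \<union> unmatched_orders) = 0"
    using prob_unmatched_burgers prob_unmatched_burgers_eq_orders by (simp add: measure_le_0_iff)
  then have "AE X in M. X \<notin> unmatched_burgers \<union> unmatched_orders"
    by (subst (asm) prob_eq_0) auto
  then show ?thesis
    by (simp only: phi_finite_0_iff)
qed

lemma AE_phi_finite: "AE X in M. \<forall>m. phi_finite X m"
  unfolding AE_all_countable
  using AE_translate[OF AE_phi_finite_0] by (simp add: phi_finite_translate)

end

theorem proposition2p1:
  fixes k :: nat and p :: real
  assumes "k \<ge> 2" and "0 \<le> p" and "p \<le> 1"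
  shows "AE X in burger_measure k p. \<forall>m::int. phi_finite X m"
proof -
  \<comment> \<open>The argument never uses the value of \<open>p\<close> (\<open>bernoulli_pmf\<close> clips it to \<open>[0, 1]\<close>).\<close>
  interpret burger_word k p
    using assms(1) by unfold_locales simp
  show ?thesis
    unfolding burger_measure_def by (rule AE_phi_finite)
qed

end
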